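(* Let $0<\alpha<1$ and $\xi\in\mathbb{R}$, and for $1<\tau<2$ define $$T_s:=\frac{\sin\pi(1-\tau+\alpha-i\xi)}{\sin\pi(1-\tau+2\alpha-i\xi)},\qquad T_B:=\frac{\sin\pi\alpha}{\pi}\,B(\tau-2\alpha+1+i\xi,2\alpha).$$ (a) If $\xi=0$ and $1<\tau<2$, then there exists a unique $\alpha_c$ such that $T_s=T_B$ exactly when $\tau=1+\alpha_c$. (b) If $\xi\ge\tfrac14$ and $1+\alpha\le\tau<2$, then $|T_s|>|T_B|$. (c) If $0<\xi<\tfrac14$ and $1+\alpha\le\tau<2$, then $\arg T_s\ne\arg T_B$. (d) If $\xi>0$ and $1<\tau<1+\alpha$, then $\arg T_s\ne\arg T_B$. Consequently, for given $0<\alpha<1$, the equation $T_s=T_B$ has a unique solution $(\tau,\xi)$ with $1<\tau<2$, $\xi\in\mathbb{R}$, namely $\xi=0$, $\tau=1+\alpha_c$; in particular for $\xi\ne0$ there are no solutions with $1<\tau<2$.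
   Context: $B(a,b)=\Gamma(a)\Gamma(b)/\Gamma(a+b)$ is the Beta function extended to complex arguments. $\arg$ denotes the principal argument, with values in $(-\pi,\pi]$. For $\xi=0$ the equation $T_s=T_B$ is equivalent to $\Gamma(2\alpha-\tau)\Gamma(\tau+1)\sin\pi(\alpha-\tau)=\Gamma(2\alpha)\sin\pi\alpha$. *)

theory Defs
  imports "HOL-Analysis.Analysis"
begin

definition Ts :: "real \<Rightarrow> real \<Rightarrow> real \<Rightarrow> complex" where
  "Ts \<alpha> \<tau> \<xi> =
     sin (complex_of_real pi * (complex_of_real (1 - \<tau> + \<alpha>) - \<i> * complex_of_real \<xi>)) /
     sin (complex_of_real pi * (complex_of_real (1 - \<tau> + 2 * \<alpha>) - \<i> * complex_of_real \<xi>))"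

definition TB :: "real \<Rightarrow> real \<Rightarrow> real \<Rightarrow> complex" where
  "TB \<alpha> \<tau> \<xi> =
     complex_of_real (sin (pi * \<alpha>) / pi) *
     Beta (complex_of_real (\<tau> - 2 * \<alpha> + 1) + \<i> * complex_of_real \<xi>) (complex_of_real (2 * \<alpha>))"

end

theory Submission
  imports Defs
begin

text \<open>
  Put \<open>z = \<tau> - 2\<alpha> + 1 + i\<xi>\<close> and \<open>w = z + \<alpha>\<close>. The reflection formula turns \<open>T\<^sub>s\<close> into a quotient
  of Gamma values, and \<open>T\<^sub>s / T\<^sub>B = \<pi> / (sin (\<pi>\<alpha>) \<Gamma>(2\<alpha>)) \<cdot> Q(w)\<close> with
  \<open>Q(w) = \<Gamma>(w + \<alpha>) \<Gamma>(1 + \<alpha> - w) / (\<Gamma>(w) \<Gamma>(1 - w))\<close>. Euler's product for \<open>\<Gamma>\<close> gives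
  \<open>Q(w) = lim n^(2\<alpha>) \<Prod>(k \<le> n) (s + k(k+1)) / (s + (k+\<alpha>)(k+\<alpha>+1))\<close> with \<open>s = w(1 - w)\<close>, and the
  zeros \<open>-k(k+1)\<close> and poles \<open>-(k+\<alpha>)(k+\<alpha>+1)\<close> of the factors interlace.

  For \<open>\<xi> > 0\<close> we have \<open>Im s < 0\<close>; each factor then has argument in \<open>(-\<pi>, 0)\<close>, and by the
  interlacing the arguments of the partial products stay in a fixed compact subinterval of
  \<open>(-\<pi>, 0)\<close>. Hence \<open>Im Q(w) < 0\<close>, so \<open>T\<^sub>s / T\<^sub>B\<close> is never a positive real: the arguments differ
  and, by conjugation, there is no solution with \<open>\<xi> \<noteq> 0\<close>. For real \<open>w\<close> between consecutive
  poles every factor decreases in \<open>w\<close>, so \<open>Q\<close> is strictly decreasing there; together with the sign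
  of \<open>T\<^sub>s\<close> and the intermediate value theorem this yields exactly one real solution
  \<open>\<tau> \<in> (1, 2)\<close>. Part (b) compares \<open>|T\<^sub>s| > 1/2\<close> with \<open>|T\<^sub>B| \<le> T\<^sub>B(\<xi> = 0) \<le> 1/2\<close>, the
  first bound from \<open>|sin|\<^sup>2 = (cosh (2 Im) - cos (2 Re)) / 2\<close>, the second from
  \<open>|\<Gamma>(z) / \<Gamma>(z + 2\<alpha>)| \<le> \<Gamma>(Re z) / \<Gamma>(Re z + 2\<alpha>)\<close>.
\<close>

section \<open>Gamma function\<close>

lemma rGamma_reflection_real: "rGamma x * rGamma (1 - x) = sin (pi * x) / (pi :: real)"
proof -
  have "complex_of_real (rGamma x * rGamma (1 - x)) = of_real (sin (pi * x) / pi)"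
    using rGamma_reflection_complex[of "of_real x"]
    by (simp add: rGamma_complex_of_real[symmetric] sin_of_real[symmetric])
  then show ?thesis by (simp only: of_real_eq_iff)
qed

lemma Gamma_reflection_real: "Gamma x * Gamma (1 - x) = pi / sin (pi * (x :: real))"
  by (simp add: Gamma_def rGamma_reflection_real flip: inverse_mult_distrib)

lemma Gamma_real_two: "Gamma (2 :: real) = 1"
  by (simp add: Gamma_numeral)

lemma Gamma_real_le_1:
  assumes "1 \<le> x" "x \<le> (2 :: real)"
  shows "Gamma x \<le> 1"
proof -
  have "(ln \<circ> Gamma) ((1 - (x - 1)) *\<^sub>R 1 + (x - 1) *\<^sub>R 2)
          \<le> (1 - (x - 1)) * (ln \<circ> Gamma) 1 + (x - 1) * (ln \<circ> Gamma) 2"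
    using assms by (intro convex_onD[OF log_convex_Gamma_real]) auto
  then have "ln (Gamma x) \<le> 0" by (simp add: Gamma_real_two algebra_simps)
  then show ?thesis using assms by (simp add: ln_le_zero_iff)
qed

lemma Gamma_real_ge_1:
  assumes "2 \<le> (x :: real)"
  shows "1 \<le> Gamma x"
  using Gamma_real_strict_mono[of 2 x] assms by (cases "x = 2") (auto simp: Gamma_real_two)

lemma nonpos_Ints_complexD: "(z :: complex) \<in> \<int>\<^sub>\<le>\<^sub>0 \<Longrightarrow> Im z = 0 \<and> Re z \<le> 0"
  by (elim nonpos_Ints_cases') auto

lemma not_Ints_between:
  fixes x :: real
  assumes "of_int n < x" "x < of_int n + 1"
  shows "x \<notin> \<int>"
  using assms by (auto elim!: Ints_cases)

lemma Gamma_rGamma_shift_LIMSEQ: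
  fixes z :: "'a :: Gamma"
  assumes "z \<notin> \<int>\<^sub>\<le>\<^sub>0"
  shows "(\<lambda>n. of_real (real n powr - b) * (\<Prod>k\<le>n. (z + of_real b + of_nat k) / (z + of_nat k)))
           \<longlonglongrightarrow> Gamma z * rGamma (z + of_real b)"
proof -
  have lim: "(\<lambda>n. Gamma_series z n * rGamma_series (z + of_real b) n) \<longlonglongrightarrow> Gamma z * rGamma (z + of_real b)"
    by (intro tendsto_intros)
  have series_eq: "Gamma_series z n * rGamma_series (z + of_real b) n
          = of_real (real n powr - b) * (\<Prod>k\<le>n. (z + of_real b + of_nat k) / (z + of_nat k))"
    if "n > 0" for n
  proof -
    define L where "L = (of_real (ln (real n)) :: 'a)"
    have "pochhammer z (Suc n) \<noteq> 0"
      using assms by (auto dest!: pochhammer_eq_0_imp_nonpos_Int)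
    moreover have "exp (z * L) = of_real (real n powr - b) * exp ((z + of_real b) * L)"
      using that by (simp add: L_def powr_def exp_add[symmetric] exp_of_real[symmetric] algebra_simps)
    moreover have "(\<Prod>k\<le>n. (z + of_real b + of_nat k) / (z + of_nat k))
                     = pochhammer (z + of_real b) (Suc n) / pochhammer z (Suc n)"
      by (simp add: pochhammer_prod prod_dividef atLeast0LessThan lessThan_Suc_atMost)
    ultimately show ?thesis
      by (simp add: Gamma_series_def rGamma_series_def L_def field_simps)
  qed
  have "eventually (\<lambda>n. Gamma_series z n * rGamma_series (z + of_real b) n
               = of_real (real n powr - b) * (\<Prod>k\<le>n. (z + of_real b + of_nat k) / (z + of_nat k))) sequentially"
    using eventually_gt_at_top[of "0::nat"] by eventually_elim (rule series_eq)
  with lim show ?thesis by (simp add: tendsto_cong)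
qed

lemma norm_add_real_divide_le:
  fixes u :: complex
  assumes "Re u > 0" "b \<ge> 0"
  shows "cmod ((u + of_real b) / u) \<le> (Re u + b) / Re u"
proof -
  have u: "u \<noteq> 0" using assms by auto
  have "cmod ((u + of_real b) / u) = cmod (1 + of_real b / u)"
    using u by (simp add: add_divide_distrib)
  also have "\<dots> \<le> 1 + b / cmod u"
    using norm_triangle_ineq[of 1 "of_real b / u"] assms by (simp add: norm_divide)
  also have "\<dots> \<le> 1 + b / Re u"
    using assms complex_Re_le_cmod[of u] by (intro add_left_mono divide_left_mono mult_pos_pos) auto
  also have "\<dots> = (Re u + b) / Re u"
    using assms by (simp add: field_simps)
  finally show ?thesis .
qed

lemma norm_Gamma_rGamma_shift_le:
  fixes z :: complex
  assumes "Re z > 0" "b \<ge> 0"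
  shows "cmod (Gamma z * rGamma (z + of_real b)) \<le> Gamma (Re z) * rGamma (Re z + b)"
proof -
  have lim_complex: "(\<lambda>n. cmod (of_real (real n powr - b) * (\<Prod>k\<le>n. (z + of_real b + of_nat k) / (z + of_nat k))))
          \<longlonglongrightarrow> cmod (Gamma z * rGamma (z + of_real b))"
    using assms by (intro tendsto_norm Gamma_rGamma_shift_LIMSEQ) (auto dest: nonpos_Ints_complexD)
  have lim_real: "(\<lambda>n. real n powr - b * (\<Prod>k\<le>n. (Re z + b + real k) / (Re z + real k)))
                   \<longlonglongrightarrow> Gamma (Re z) * rGamma (Re z + b)"
  proof -
    have "Re z \<notin> \<int>\<^sub>\<le>\<^sub>0" using assms by (auto elim!: nonpos_Ints_cases')
    from Gamma_rGamma_shift_LIMSEQ[OF this, of b] show ?thesis by simp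
  qed
  have "\<forall>n. cmod (of_real (real n powr - b) * (\<Prod>k\<le>n. (z + of_real b + of_nat k) / (z + of_nat k)))
                   \<le> real n powr - b * (\<Prod>k\<le>n. (Re z + b + real k) / (Re z + real k))"
    unfolding norm_mult prod_norm[symmetric]
    using norm_add_real_divide_le[of "z + of_nat k" b for k] assms
    by (intro allI mult_mono prod_mono conjI prod_nonneg) (auto simp: add_ac)
  from tendsto_le[OF trivial_limit_sequentially lim_real lim_complex always_eventually[OF this]]
  show ?thesis .
qed

section \<open>The reflection quotient as a limit of products\<close>

text \<open>\<open>reflection_quotient a w = \<Gamma>(w + a) \<Gamma>(1 + a - w) / (\<Gamma>(w) \<Gamma>(1 - w))\<close>, the shape of
  \<open>T\<^sub>s / T\<^sub>B\<close> after the reflection formula.\<close>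

definition reflection_quotient :: "real \<Rightarrow> 'a :: Gamma \<Rightarrow> 'a" where
  "reflection_quotient a w = rGamma w * rGamma (1 - w) / (rGamma (w + of_real a) * rGamma (1 + of_real a - w))"

definition interlaced_factor :: "real \<Rightarrow> 'a :: real_normed_field \<Rightarrow> nat \<Rightarrow> 'a" where
  "interlaced_factor a s k = (s + of_real (real k * (real k + 1))) / (s + of_real ((real k + a) * (real k + a + 1)))"

lemma reflection_quotient_of_real:
  "reflection_quotient a (complex_of_real w) = of_real (reflection_quotient a w)"
  by (simp add: reflection_quotient_def flip: rGamma_complex_of_real)

lemma reflection_quotient_LIMSEQ:
  fixes w :: "'a :: Gamma"
  assumes "w + of_real a \<notin> \<int>\<^sub>\<le>\<^sub>0" "1 + of_real a - w \<notin> \<int>\<^sub>\<le>\<^sub>0"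
  shows "(\<lambda>n. of_real (real n powr (2 * a)) * (\<Prod>k\<le>n. interlaced_factor a (w * (1 - w)) k))
           \<longlonglongrightarrow> reflection_quotient a w"
proof -
  have factor: "(w + of_nat k) / (w + of_real a + of_nat k) * ((1 - w + of_nat k) / (1 + of_real a - w + of_nat k))
                  = interlaced_factor a (w * (1 - w)) k" for k
    by (simp add: interlaced_factor_def algebra_simps)
  have "of_real (real n powr a) * (\<Prod>k\<le>n. (w + of_nat k) / (w + of_real a + of_nat k))
          * (of_real (real n powr a) * (\<Prod>k\<le>n. (1 - w + of_nat k) / (1 + of_real a - w + of_nat k)))
        = of_real (real n powr (2 * a)) * (\<Prod>k\<le>n. interlaced_factor a (w * (1 - w)) k)" for n
  proof -
    have "real n powr (2 * a) = real n powr a * real n powr a"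
      by (simp add: powr_add[symmetric])
    then show ?thesis
      unfolding factor[symmetric] prod.distrib by (simp add: mult_ac)
  qed
  moreover have "Gamma (w + of_real a) * rGamma w * (Gamma (1 + of_real a - w) * rGamma (1 - w))
                   = reflection_quotient a w"
    by (simp add: reflection_quotient_def Gamma_def field_simps)
  ultimately show ?thesis
    using tendsto_mult[OF Gamma_rGamma_shift_LIMSEQ[OF assms(1), of "- a"]
                          Gamma_rGamma_shift_LIMSEQ[OF assms(2), of "- a"]] by simp
qed

section \<open>Non-real arguments\<close>

lemma one_plus_i_mult_polar:
  "1 + \<i> * complex_of_real t = of_real (sqrt (1 + t\<^sup>2)) * cis (arctan t)"
proof -
  have "sqrt (1 + t\<^sup>2) > 0" by (simp add: add_pos_nonneg)
  then show ?thesis by (simp add: complex_eq_iff cos_arctan sin_arctan)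
qed

lemma add_real_divide_add_real_polar:
  fixes s :: complex
  assumes "Im s < 0"
  shows "(s + of_real b) / (s + of_real d)
           = of_real (cmod ((s + of_real b) / (s + of_real d)))
             * cis (arctan ((Re s + b) / - Im s) - arctan ((Re s + d) / - Im s))"
proof -
  define c where "c = - Im s"
  have c: "c > 0" using assms by (simp add: c_def)
  have shift: "s + of_real x = - \<i> * of_real c * (1 + \<i> * of_real ((Re s + x) / c))" for x
    using c by (simp add: complex_eq_iff c_def field_simps)
  have sqrt_pos: "sqrt (1 + y\<^sup>2) > 0" for y :: real by (simp add: add_pos_nonneg)
  define r where "r = sqrt (1 + ((Re s + b) / c)\<^sup>2) / sqrt (1 + ((Re s + d) / c)\<^sup>2)"
  have r: "r > 0" using sqrt_pos by (simp add: r_def)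
  have "(s + of_real b) / (s + of_real d)
          = of_real r * cis (arctan ((Re s + b) / c) - arctan ((Re s + d) / c))"
    unfolding shift one_plus_i_mult_polar cis_divide[symmetric] r_def
    using c sqrt_pos by (simp add: field_simps)
  moreover from this have "cmod ((s + of_real b) / (s + of_real d)) = r"
    using r by (simp add: norm_mult)
  ultimately show ?thesis by (simp add: c_def)
qed

lemma cis_sum: "cis (\<Sum>k\<in>A. f k) = (\<Prod>k\<in>A. cis (f k))"
  by (induction A rule: infinite_finite_induct) (simp_all flip: cis_mult)

lemma sin_le_max_endpoints:
  fixes l h x :: real
  assumes "- pi < l" "l \<le> x" "x \<le> h" "h < 0"
  shows "sin x \<le> max (sin l) (sin h)"
proof (cases "x \<le> - (pi / 2)")
  case True
  have "sin x = sin (- pi - x)" by (simp add: sin_diff)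
  also have "\<dots> \<le> sin (- pi - l)"
    using assms True by (intro sin_monotone_2pi_le) auto
  also have "\<dots> = sin l" by (simp add: sin_diff)
  finally show ?thesis by simp
next
  case False
  then have "sin x \<le> sin h" using assms by (intro sin_monotone_2pi_le) auto
  then show ?thesis by simp
qed

lemma sum_interlaced_bounds:
  fixes A :: "real \<Rightarrow> real" and b d :: "nat \<Rightarrow> real"
  assumes A: "mono A" and bd: "\<And>k. b k \<le> d k" and db: "\<And>k. d k \<le> b (Suc k)"
  shows "A (b 0) - A (b (Suc n)) \<le> (\<Sum>k\<le>n. A (b k) - A (d k))"
    and "(\<Sum>k\<le>n. A (b k) - A (d k)) \<le> A (b 0) - A (d 0)"
proof -
  have "A (b 0) - A (b (Suc n)) = (\<Sum>k\<le>n. A (b k) - A (b (Suc k)))"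
    using sum_lessThan_telescope'[of "\<lambda>k. A (b k)" "Suc n"] by (simp add: lessThan_Suc_atMost)
  also have "\<dots> \<le> (\<Sum>k\<le>n. A (b k) - A (d k))"
    using A db by (intro sum_mono diff_left_mono) (simp add: monoD)
  finally show "A (b 0) - A (b (Suc n)) \<le> (\<Sum>k\<le>n. A (b k) - A (d k))" .
  have "(\<Sum>k\<le>n. A (b k) - A (d k)) = A (b 0) - A (d 0) + (\<Sum>k<n. A (b (Suc k)) - A (d (Suc k)))"
    by (simp add: sum.atMost_shift)
  also have "\<dots> \<le> A (b 0) - A (d 0)"
    using A bd by (simp add: sum_nonpos monoD)
  finally show "(\<Sum>k\<le>n. A (b k) - A (d k)) \<le> A (b 0) - A (d 0)" .
qed

lemma prod_interlaced_factor_polar: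
  fixes s :: complex
  assumes "Im s < 0"
  shows "(\<Prod>k\<le>n. interlaced_factor a s k)
           = of_real (\<Prod>k\<le>n. cmod (interlaced_factor a s k))
             * cis (\<Sum>k\<le>n. arctan ((Re s + real k * (real k + 1)) / - Im s)
                             - arctan ((Re s + (real k + a) * (real k + a + 1)) / - Im s))"
proof -
  have "(\<Prod>k\<le>n. interlaced_factor a s k)
          = (\<Prod>k\<le>n. of_real (cmod (interlaced_factor a s k))
                     * cis (arctan ((Re s + real k * (real k + 1)) / - Im s)
                            - arctan ((Re s + (real k + a) * (real k + a + 1)) / - Im s)))"
    unfolding interlaced_factor_def using add_real_divide_add_real_polar[OF assms] by (intro prod.cong refl)
  then show ?thesis
    by (simp only: prod.distrib of_real_prod cis_sum)
qed

lemma Im_prod_interlaced_factor_le: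
  fixes s :: complex
  assumes s: "Im s < 0" and a: "0 < a" "a \<le> 1"
  obtains \<delta> where "\<delta> > 0"
    "\<And>n. Im (\<Prod>k\<le>n. interlaced_factor a s k) \<le> - \<delta> * cmod (\<Prod>k\<le>n. interlaced_factor a s k)"
proof -
  define A where "A x = arctan ((Re s + x) / - Im s)" for x
  define b where "b k = real k * (real k + 1)" for k :: nat
  define d where "d k = (real k + a) * (real k + a + 1)" for k :: nat
  define \<Theta> where "\<Theta> n = (\<Sum>k\<le>n. A (b k) - A (d k))" for n
  have A: "strict_mono A"
    using s by (intro strict_monoI) (simp add: A_def arctan_less_iff divide_strict_right_mono_neg)
  have bd: "b k < d k" for k
    using a by (simp add: b_def d_def algebra_simps add_pos_nonneg)
  have db: "d k \<le> b (Suc k)" for k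
    using a by (simp add: b_def d_def add.commute mult_mono)
  \<comment> \<open>the argument \<open>\<Theta> n\<close> of the \<open>n\<close>-th partial product stays in \<open>(lo, hi] \<subset> (-\<pi>, 0)\<close>\<close>
  define lo where "lo = A 0 - pi / 2"
  define hi where "hi = A (b 0) - A (d 0)"
  have lo: "- pi < lo"
    using arctan_bounded[of "Re s / - Im s"] by (simp add: lo_def A_def)
  have hi: "- pi < hi" "hi < 0"
    using arctan_bounded[of "(Re s + b 0) / - Im s"] arctan_bounded[of "(Re s + d 0) / - Im s"]
      strict_monoD[OF A bd[of 0]] by (auto simp: hi_def A_def)
  have \<Theta>_bounds: "A (b 0) - A (b (Suc n)) \<le> \<Theta> n" "\<Theta> n \<le> hi" for n
    unfolding \<Theta>_def hi_def
    by (rule sum_interlaced_bounds[where A = A]; use strict_mono_mono[OF A] less_imp_le[OF bd] db in simp)+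
  have \<Theta>: "lo < \<Theta> n" "\<Theta> n \<le> hi" for n
    using \<Theta>_bounds[of n] arctan_bounded[of "(Re s + b (Suc n)) / - Im s"]
    by (auto simp: lo_def A_def b_def)
  define \<delta> where "\<delta> = - max (sin lo) (sin hi)"
  have "\<delta> > 0"
    using sin_gt_zero[of "- lo"] sin_gt_zero[of "- hi"] lo hi \<Theta>[of 0] by (simp add: \<delta>_def)
  moreover have "Im (\<Prod>k\<le>n. interlaced_factor a s k) \<le> - \<delta> * cmod (\<Prod>k\<le>n. interlaced_factor a s k)" for n
  proof -
    define R where "R = (\<Prod>k\<le>n. cmod (interlaced_factor a s k))"
    have R: "R \<ge> 0" by (simp add: R_def prod_nonneg)
    moreover have "sin (\<Theta> n) \<le> - \<delta>"
      using sin_le_max_endpoints[OF lo less_imp_le[OF \<Theta>(1)] \<Theta>(2) hi(2)] by (simp add: \<delta>_def)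
    ultimately have "R * sin (\<Theta> n) \<le> R * - \<delta>" by (intro mult_left_mono)
    moreover have "(\<Prod>k\<le>n. interlaced_factor a s k) = of_real R * cis (\<Theta> n)"
      using prod_interlaced_factor_polar[OF s] by (simp add: R_def \<Theta>_def A_def b_def d_def)
    ultimately show ?thesis
      using R by (simp add: norm_mult mult_ac)
  qed
  ultimately show ?thesis by (rule that)
qed

lemma Im_reflection_quotient_neg:
  fixes w :: complex
  assumes w: "Im (w * (1 - w)) < 0" and a: "0 < a" "a \<le> 1"
  shows "Im (reflection_quotient a w) < 0"
proof -
  have "Im w \<noteq> 0" using w by auto
  then have nonint: "w + of_real a \<notin> \<int>\<^sub>\<le>\<^sub>0" "1 + of_real a - w \<notin> \<int>\<^sub>\<le>\<^sub>0" "w \<notin> \<int>\<^sub>\<le>\<^sub>0" "1 - w \<notin> \<int>\<^sub>\<le>\<^sub>0"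
    by (auto dest: nonpos_Ints_complexD)
  obtain \<delta> where \<delta>: "\<delta> > 0"
    and bound: "\<And>n. Im (\<Prod>k\<le>n. interlaced_factor a (w * (1 - w)) k)
                      \<le> - \<delta> * cmod (\<Prod>k\<le>n. interlaced_factor a (w * (1 - w)) k)"
    using Im_prod_interlaced_factor_le[OF w a] by blast
  define Q where "Q = reflection_quotient a w"
  define X where "X n = of_real (real n powr (2 * a)) * (\<Prod>k\<le>n. interlaced_factor a (w * (1 - w)) k)" for n
  have lim: "X \<longlonglongrightarrow> Q"
    unfolding X_def Q_def by (rule reflection_quotient_LIMSEQ[OF nonint(1,2)])
  have bound_X: "\<forall>n. Im (X n) \<le> - \<delta> * cmod (X n)"
    using mult_left_mono[OF bound, of "real n powr (2 * a)" for n]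
    by (simp add: X_def norm_mult mult_ac)
  have "(\<lambda>n. - \<delta> * cmod (X n)) \<longlonglongrightarrow> - \<delta> * cmod Q"
    by (intro tendsto_intros lim)
  from tendsto_le[OF trivial_limit_sequentially this tendsto_Im[OF lim] always_eventually[OF bound_X]]
  have Im_le: "Im Q \<le> - \<delta> * cmod Q" .
  have "Q \<noteq> 0"
    using nonint by (simp add: Q_def reflection_quotient_def rGamma_eq_zero_iff)
  then have "0 < \<delta> * cmod Q"
    using \<delta> by simp
  with Im_le show ?thesis
    unfolding Q_def by linarith
qed

section \<open>Real arguments\<close>

lemma add_divide_add_strict_mono:
  fixes b d s1 s2 :: real
  assumes "b < d" "s2 < s1" "0 < (s1 + d) * (s2 + d)"
  shows "(s2 + b) / (s2 + d) < (s1 + b) / (s1 + d)"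
proof -
  have nz: "s1 + d \<noteq> 0" "s2 + d \<noteq> 0" using assms(3) by auto
  have "(s1 + b) * (s2 + d) - (s2 + b) * (s1 + d) = (d - b) * (s1 - s2)"
    by (simp add: algebra_simps)
  then have "(s1 + b) / (s1 + d) - (s2 + b) / (s2 + d) = (d - b) * (s1 - s2) / ((s1 + d) * (s2 + d))"
    using diff_frac_eq[OF nz, of "s1 + b" "s2 + b"] by simp
  also have "\<dots> > 0" using assms by simp
  finally show ?thesis by simp
qed

lemma interlaced_factor_real_strict_antimono:
  fixes \<alpha> w1 w2 :: real
  assumes a: "0 < \<alpha>" "\<alpha> \<le> 1" and w: "real m + 1 + \<alpha> < w1" "w1 < w2" "w2 < real m + 2"
  shows "0 < interlaced_factor \<alpha> (w2 * (1 - w2)) k"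
    and "interlaced_factor \<alpha> (w2 * (1 - w2)) k < interlaced_factor \<alpha> (w1 * (1 - w1)) k"
proof -
  \<comment> \<open>\<open>s = - g (w - 1)\<close>, and \<open>w \<in> (m + 1 + \<alpha>, m + 2)\<close> means \<open>g (m + \<alpha>) < g (w - 1) < g (m + 1)\<close>:
      \<open>-s\<close> lies in a gap between a pole and the next zero, so no factor changes sign\<close>
  define g :: "real \<Rightarrow> real" where "g t = t * (t + 1)" for t
  have g_less: "g x < g y" if "- 1/2 \<le> x" "x < y" for x y
  proof -
    have "0 < (y - x) * (x + y + 1)" using that by (intro mult_pos_pos) auto
    then show ?thesis by (simp add: g_def algebra_simps)
  qed
  have g_le: "g x \<le> g y" if "- 1/2 \<le> x" "x \<le> y" for x y
    using g_less[OF that(1), of y] that(2) by (cases "x = y") auto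
  define b d where "b = g (real k)" and "d = g (real k + \<alpha>)"
  have s: "w1 * (1 - w1) = - g (w1 - 1)" "w2 * (1 - w2) = - g (w2 - 1)"
    by (simp_all add: g_def algebra_simps)
  have bd: "b < d" using a by (simp add: b_def d_def g_less)
  have s12: "g (w1 - 1) < g (w2 - 1)" using a w by (intro g_less) auto
  have signs: "(g (w1 - 1) > d \<and> g (w2 - 1) > d) \<or> (g (w1 - 1) < b \<and> g (w2 - 1) < b)"
  proof (cases "k \<le> m")
    case True
    have "d \<le> g (real m + \<alpha>)" using True a by (simp add: d_def g_le)
    also have "\<dots> < g (w1 - 1)" using a w by (intro g_less) auto
    finally show ?thesis using s12 by auto
  next
    case False
    have "g (w2 - 1) < g (real m + 1)" using a w by (intro g_less) auto
    also have "\<dots> \<le> b" using False by (simp add: b_def g_le)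
    finally show ?thesis using s12 by auto
  qed
  have factor: "interlaced_factor \<alpha> (w * (1 - w)) k = (- g (w - 1) + b) / (- g (w - 1) + d)" for w
    by (simp add: interlaced_factor_def b_def d_def g_def algebra_simps)
  show "0 < interlaced_factor \<alpha> (w2 * (1 - w2)) k"
    unfolding factor using signs bd by (auto intro: divide_pos_pos divide_neg_neg)
  show "interlaced_factor \<alpha> (w2 * (1 - w2)) k < interlaced_factor \<alpha> (w1 * (1 - w1)) k"
    unfolding factor using signs bd s12
    by (intro add_divide_add_strict_mono) (auto intro: mult_pos_pos mult_neg_neg)
qed

lemma LIMSEQ_scaled_prod_less:
  fixes f g c :: "nat \<Rightarrow> real"
  assumes f: "\<And>k. 0 < f k" "\<And>k. f k \<le> g k" "f 0 < g 0" and c: "\<And>n. 0 \<le> c n"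
    and F: "(\<lambda>n. c n * (\<Prod>k\<le>n. f k)) \<longlonglongrightarrow> F" and G: "(\<lambda>n. c n * (\<Prod>k\<le>n. g k)) \<longlonglongrightarrow> G"
    and "F \<noteq> 0"
  shows "F < G"
proof -
  have g: "0 < g k" for k using f(1,2)[of k] by linarith
  \<comment> \<open>the strict inequality in the first factor survives the limit as a factor \<open>r > 1\<close>\<close>
  define r where "r = g 0 / f 0"
  have r: "r > 1" using f(1,3) by (simp add: r_def)
  have "r * (c n * (\<Prod>k\<le>n. f k)) \<le> c n * (\<Prod>k\<le>n. g k)" for n
  proof -
    have "r * (\<Prod>k\<le>n. f k) = g 0 * (\<Prod>k<n. f (Suc k))"
      using f(1)[of 0] by (simp add: r_def prod.atMost_shift)
    also have "\<dots> \<le> g 0 * (\<Prod>k<n. g (Suc k))"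
      using f g by (intro mult_left_mono prod_mono) (auto simp: less_imp_le)
    also have "\<dots> = (\<Prod>k\<le>n. g k)"
      by (simp add: prod.atMost_shift)
    finally show ?thesis
      unfolding mult.left_commute[of r] by (rule mult_left_mono) (rule c)
  qed
  from tendsto_le[OF trivial_limit_sequentially G tendsto_mult[OF tendsto_const F] always_eventually[OF allI[OF this]]]
  have "r * F \<le> G" .
  moreover have "0 \<le> F"
    using f(1) c by (intro tendsto_le[OF trivial_limit_sequentially F tendsto_const] always_eventually allI
        mult_nonneg_nonneg prod_nonneg) (auto simp: less_imp_le)
  ultimately show "F < G"
    using r \<open>F \<noteq> 0\<close> mult_strict_right_mono[of 1 r F] by linarith
qed

lemma reflection_quotient_real_strict_antimono:
  assumes a: "0 < \<alpha>" "\<alpha> < 1"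
  shows "strict_antimono_on {real m + 1 + \<alpha> <..< real m + 2} (reflection_quotient \<alpha> :: real \<Rightarrow> real)"
proof (rule monotone_onI)
  fix w1 w2 assume w: "w1 \<in> {real m + 1 + \<alpha> <..< real m + 2}" "w2 \<in> {real m + 1 + \<alpha> <..< real m + 2}" "w1 < w2"
  have nonint: "w + \<alpha> \<notin> \<int>\<^sub>\<le>\<^sub>0" "1 + \<alpha> - w \<notin> \<int>\<^sub>\<le>\<^sub>0" "w \<notin> \<int>\<^sub>\<le>\<^sub>0" "1 - w \<notin> \<int>\<^sub>\<le>\<^sub>0"
    if "w \<in> {real m + 1 + \<alpha> <..< real m + 2}" for w
  proof -
    have "1 + \<alpha> - w \<notin> \<int>" "1 - w \<notin> \<int>"
      by (rule not_Ints_between[of "- int m - 1"]; use that a in simp)+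
    then show "1 + \<alpha> - w \<notin> \<int>\<^sub>\<le>\<^sub>0" "1 - w \<notin> \<int>\<^sub>\<le>\<^sub>0"
      using nonpos_Ints_subset_Ints by auto
    show "w + \<alpha> \<notin> \<int>\<^sub>\<le>\<^sub>0" "w \<notin> \<int>\<^sub>\<le>\<^sub>0"
      using that a by (auto elim!: nonpos_Ints_cases')
  qed
  have lim: "(\<lambda>n. real n powr (2 * \<alpha>) * (\<Prod>k\<le>n. interlaced_factor \<alpha> (w * (1 - w)) k))
               \<longlonglongrightarrow> reflection_quotient \<alpha> w"
    if "w \<in> {real m + 1 + \<alpha> <..< real m + 2}" for w
    using reflection_quotient_LIMSEQ[of w \<alpha>] nonint[OF that] by simp
  show "reflection_quotient \<alpha> w2 < reflection_quotient \<alpha> w1"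
  proof (rule LIMSEQ_scaled_prod_less[OF _ _ _ _ lim[OF w(2)] lim[OF w(1)]])
    show "0 < interlaced_factor \<alpha> (w2 * (1 - w2)) k"
      and "interlaced_factor \<alpha> (w2 * (1 - w2)) k \<le> interlaced_factor \<alpha> (w1 * (1 - w1)) k"
      and "interlaced_factor \<alpha> (w2 * (1 - w2)) 0 < interlaced_factor \<alpha> (w1 * (1 - w1)) 0" for k
      using interlaced_factor_real_strict_antimono[of \<alpha> m w1 w2] a w by (auto intro: less_imp_le)
    show "reflection_quotient \<alpha> w2 \<noteq> 0"
      using nonint[OF w(2)] by (simp add: reflection_quotient_def rGamma_eq_zero_iff)
  qed simp
qed

section \<open>Factorisation of the two sides\<close>

lemma Ts_eq_sin_divide_sin:
  "Ts \<alpha> \<tau> \<xi> = sin (of_real pi * (of_real (\<tau> + 1 - \<alpha>) + \<i> * of_real \<xi>))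
                / sin (of_real pi * (of_real (\<tau> - 2 * \<alpha> + 1) + \<i> * of_real \<xi>))"
proof -
  have "sin (2 * of_real pi - u) = - sin u" for u :: complex
    by (simp add: sin_diff)
  moreover have "complex_of_real pi * (of_real (1 - \<tau> + \<alpha>) - \<i> * of_real \<xi>)
                   = 2 * of_real pi - of_real pi * (of_real (\<tau> + 1 - \<alpha>) + \<i> * of_real \<xi>)"
    "complex_of_real pi * (of_real (1 - \<tau> + 2 * \<alpha>) - \<i> * of_real \<xi>)
                   = 2 * of_real pi - of_real pi * (of_real (\<tau> - 2 * \<alpha> + 1) + \<i> * of_real \<xi>)"
    by (simp_all add: algebra_simps)
  ultimately show ?thesis by (simp add: Ts_def)
qed

lemma Ts_eq_reflection_quotient_TB:
  assumes a: "0 < \<alpha>" "\<alpha> < 1" and \<tau>: "2 * \<alpha> < \<tau> + 1"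
    and nonint: "complex_of_real (\<tau> - 2 * \<alpha>) + \<i> * of_real \<xi> \<notin> \<int>"
  shows "Ts \<alpha> \<tau> \<xi> = of_real (pi / (sin (pi * \<alpha>) * Gamma (2 * \<alpha>)))
                     * reflection_quotient \<alpha> (of_real (\<tau> + 1 - \<alpha>) + \<i> * of_real \<xi>) * TB \<alpha> \<tau> \<xi>"
proof -
  define z where "z = complex_of_real (\<tau> - 2 * \<alpha> + 1) + \<i> * of_real \<xi>"
  define w where "w = z + of_real \<alpha>"
  have "Ts \<alpha> \<tau> \<xi> = sin (of_real pi * w) / sin (of_real pi * z)"
    by (simp add: Ts_eq_sin_divide_sin w_def z_def algebra_simps)
  also have "\<dots> = rGamma w * rGamma (1 - w) / (rGamma z * rGamma (1 - z))"
    by (simp add: rGamma_reflection_complex)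
  finally have Ts: "Ts \<alpha> \<tau> \<xi> = rGamma w * rGamma (1 - w) / (rGamma z * rGamma (1 - z))" .
  have TB: "TB \<alpha> \<tau> \<xi> = of_real (sin (pi * \<alpha>) / pi) * (Gamma z * of_real (Gamma (2 * \<alpha>)) * rGamma (z + of_real (2 * \<alpha>)))"
    using Gamma_complex_of_real[of "2 * \<alpha>"] by (simp add: TB_def Beta_altdef z_def)
  have "z \<notin> \<int>\<^sub>\<le>\<^sub>0" "z + of_real (2 * \<alpha>) \<notin> \<int>\<^sub>\<le>\<^sub>0"
    using a \<tau> by (auto simp: z_def dest!: nonpos_Ints_complexD)
  moreover have "1 - z \<notin> \<int>\<^sub>\<le>\<^sub>0"
  proof
    assume "1 - z \<in> \<int>\<^sub>\<le>\<^sub>0"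
    then have "- (1 - z) \<in> \<int>" by (intro Ints_minus) (auto dest: nonpos_Ints_Int)
    moreover have "- (1 - z) = complex_of_real (\<tau> - 2 * \<alpha>) + \<i> * of_real \<xi>"
      by (simp add: z_def)
    ultimately show False using nonint by metis
  qed
  moreover have "sin (pi * \<alpha>) > 0" "Gamma (2 * \<alpha>) > 0" "2 * \<alpha> \<notin> \<int>\<^sub>\<le>\<^sub>0"
    using a by (auto intro: sin_gt_zero elim!: nonpos_Ints_cases')
  moreover have "w + of_real \<alpha> = z + of_real (2 * \<alpha>)" "1 + of_real \<alpha> - w = 1 - z"
    by (simp_all add: w_def)
  moreover have "of_real (\<tau> + 1 - \<alpha>) + \<i> * of_real \<xi> = w"
    by (simp add: w_def z_def)
  ultimately show ?thesis
    unfolding Ts TB reflection_quotient_def by (simp add: Gamma_def rGamma_eq_zero_iff field_simps)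
qed

lemma TB_nonzero:
  assumes "0 < \<alpha>" "\<alpha> < 1" "2 * \<alpha> < \<tau> + 1"
  shows "TB \<alpha> \<tau> \<xi> \<noteq> 0"
proof -
  have "sin (pi * \<alpha>) > 0" using assms by (intro sin_gt_zero) auto
  moreover have "Gamma (2 * \<alpha>) > 0" using assms by simp
  then have "Gamma (2 * complex_of_real \<alpha>) \<noteq> 0"
    using Gamma_complex_of_real[of "2 * \<alpha>"] by simp
  ultimately show ?thesis
    using assms by (auto simp: TB_def Beta_altdef Gamma_eq_zero_iff rGamma_eq_zero_iff dest!: nonpos_Ints_complexD)
qed

lemma Ts_uminus: "Ts \<alpha> \<tau> (- \<xi>) = cnj (Ts \<alpha> \<tau> \<xi>)"
  by (simp add: Ts_def cnj_sin)

lemma TB_uminus: "TB \<alpha> \<tau> (- \<xi>) = cnj (TB \<alpha> \<tau> \<xi>)"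
  by (simp add: TB_def Beta_def cnj_Gamma)

definition Ts_real :: "real \<Rightarrow> real \<Rightarrow> real" where
  "Ts_real \<alpha> \<tau> = sin (pi * (1 - \<tau> + \<alpha>)) / sin (pi * (1 - \<tau> + 2 * \<alpha>))"

definition TB_real :: "real \<Rightarrow> real \<Rightarrow> real" where
  "TB_real \<alpha> \<tau> = sin (pi * \<alpha>) / pi * Beta (\<tau> - 2 * \<alpha> + 1) (2 * \<alpha>)"

lemma Ts_zero: "Ts \<alpha> \<tau> 0 = of_real (Ts_real \<alpha> \<tau>)"
  by (simp add: Ts_def Ts_real_def flip: sin_of_real)

lemma TB_zero: "TB \<alpha> \<tau> 0 = of_real (TB_real \<alpha> \<tau>)"
  by (simp add: TB_def TB_real_def flip: Beta_complex_of_real)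

lemma TB_real_pos:
  assumes "0 < \<alpha>" "\<alpha> < 1" "2 * \<alpha> < \<tau> + 1"
  shows "TB_real \<alpha> \<tau> > 0"
  using assms sin_gt_zero[of "pi * \<alpha>"] by (simp add: TB_real_def Beta_def)

lemma Ts_real_eq_reflection_quotient_TB_real:
  assumes "0 < \<alpha>" "\<alpha> < 1" "2 * \<alpha> < \<tau> + 1" "\<tau> - 2 * \<alpha> \<notin> \<int>"
  shows "Ts_real \<alpha> \<tau> = pi / (sin (pi * \<alpha>) * Gamma (2 * \<alpha>)) * reflection_quotient \<alpha> (\<tau> + 1 - \<alpha>) * TB_real \<alpha> \<tau>"
proof -
  have "Ts \<alpha> \<tau> 0 = of_real (pi / (sin (pi * \<alpha>) * Gamma (2 * \<alpha>)))
                      * reflection_quotient \<alpha> (of_real (\<tau> + 1 - \<alpha>) + \<i> * of_real 0) * TB \<alpha> \<tau> 0"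
  proof (rule Ts_eq_reflection_quotient_TB)
    show "complex_of_real (\<tau> - 2 * \<alpha>) + \<i> * of_real 0 \<notin> \<int>"
      using assms(4) by (simp only: of_real_0 mult_zero_right add_0_right of_real_in_Ints_iff) simp
  qed (use assms in simp_all)
  then show ?thesis
    by (simp only: Ts_zero TB_zero reflection_quotient_of_real of_real_mult[symmetric] of_real_eq_iff
        mult_zero_right add_0_right of_real_0)
qed

section \<open>Non-real solutions are excluded\<close>

lemma Arg_ne_of_Im_divide_neg:
  assumes "Im (u / v) < 0"
  shows "Arg u \<noteq> Arg v"
proof
  assume "Arg u = Arg v"
  moreover have "u \<noteq> 0" "v \<noteq> 0" using assms by auto
  ultimately obtain x where "u = of_real x * v" using Arg_eq_iff by blast
  with \<open>v \<noteq> 0\<close> assms show False by simp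
qed

lemma Im_Ts_divide_TB_neg:
  assumes a: "0 < \<alpha>" "\<alpha> < 1" and \<tau>: "1 < \<tau>" and \<xi>: "0 < \<xi>"
  shows "Im (Ts \<alpha> \<tau> \<xi> / TB \<alpha> \<tau> \<xi>) < 0"
proof -
  define w where "w = complex_of_real (\<tau> + 1 - \<alpha>) + \<i> * of_real \<xi>"
  define K where "K = pi / (sin (pi * \<alpha>) * Gamma (2 * \<alpha>))"
  have "Im (w * (1 - w)) = \<xi> * (1 - 2 * (\<tau> + 1 - \<alpha>))"
    by (simp add: w_def algebra_simps)
  also have "\<dots> < 0" using a \<tau> \<xi> by (intro mult_pos_neg) auto
  finally have Q: "Im (reflection_quotient \<alpha> w) < 0"
    using a by (intro Im_reflection_quotient_neg) auto
  have "Ts \<alpha> \<tau> \<xi> = of_real K * reflection_quotient \<alpha> w * TB \<alpha> \<tau> \<xi>"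
    unfolding w_def K_def using a \<tau> \<xi> by (intro Ts_eq_reflection_quotient_TB) (auto simp: complex_is_Int_iff)
  moreover have "TB \<alpha> \<tau> \<xi> \<noteq> 0" using a \<tau> by (intro TB_nonzero) auto
  ultimately have "Ts \<alpha> \<tau> \<xi> / TB \<alpha> \<tau> \<xi> = of_real K * reflection_quotient \<alpha> w"
    by simp
  moreover have "K > 0"
    using a sin_gt_zero[of "pi * \<alpha>"] by (simp add: K_def)
  ultimately show ?thesis using Q by (simp add: mult_pos_neg)
qed

lemma Ts_ne_TB:
  assumes "0 < \<alpha>" "\<alpha> < 1" "1 < \<tau>" "\<xi> \<noteq> 0"
  shows "Ts \<alpha> \<tau> \<xi> \<noteq> TB \<alpha> \<tau> \<xi>"
proof -
  have "Ts \<alpha> \<tau> \<bar>\<xi>\<bar> \<noteq> TB \<alpha> \<tau> \<bar>\<xi>\<bar>"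
    using Im_Ts_divide_TB_neg[of \<alpha> \<tau> "\<bar>\<xi>\<bar>"] TB_nonzero[of \<alpha> \<tau> "\<bar>\<xi>\<bar>"] assms by auto
  then show ?thesis
    using Ts_uminus[of \<alpha> \<tau> \<xi>] TB_uminus[of \<alpha> \<tau> \<xi>] by (cases "\<xi> > 0") auto
qed

section \<open>Moduli\<close>

lemma norm_TB_le_TB_real:
  assumes "0 < \<alpha>" "\<alpha> < 1" "2 * \<alpha> < \<tau> + 1"
  shows "cmod (TB \<alpha> \<tau> \<xi>) \<le> TB_real \<alpha> \<tau>"
proof -
  define z where "z = complex_of_real (\<tau> - 2 * \<alpha> + 1) + \<i> * of_real \<xi>"
  define c where "c = sin (pi * \<alpha>) / pi * Gamma (2 * \<alpha>)"
  have c: "c \<ge> 0"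
    using assms sin_gt_zero[of "pi * \<alpha>"] by (simp add: c_def)
  have "Gamma (2 * complex_of_real \<alpha>) = of_real (Gamma (2 * \<alpha>))"
    using Gamma_complex_of_real[of "2 * \<alpha>"] by simp
  then have "TB \<alpha> \<tau> \<xi> = of_real c * (Gamma z * rGamma (z + of_real (2 * \<alpha>)))"
    by (simp add: TB_def Beta_altdef z_def c_def)
  then have "cmod (TB \<alpha> \<tau> \<xi>) = c * cmod (Gamma z * rGamma (z + of_real (2 * \<alpha>)))"
    using c by (simp add: norm_mult)
  also have "\<dots> \<le> c * (Gamma (\<tau> - 2 * \<alpha> + 1) * rGamma (\<tau> - 2 * \<alpha> + 1 + 2 * \<alpha>))"
    using norm_Gamma_rGamma_shift_le[of z "2 * \<alpha>"] assms c
    by (intro mult_left_mono) (simp_all add: z_def)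
  also have "\<dots> = TB_real \<alpha> \<tau>"
    by (simp add: TB_real_def Beta_altdef c_def)
  finally show ?thesis .
qed

lemma TB_real_le_inverse_pi:
  assumes "1/2 \<le> \<alpha>" "\<alpha> < 1" "2 * \<alpha> \<le> \<tau>" "\<tau> \<le> 1 + 2 * \<alpha>" "1 \<le> \<tau>"
  shows "TB_real \<alpha> \<tau> \<le> 1 / pi"
proof -
  have "Gamma (\<tau> - 2 * \<alpha> + 1) \<le> 1" "Gamma (2 * \<alpha>) \<le> 1" "1 \<le> Gamma (\<tau> + 1)"
    using assms by (auto intro: Gamma_real_le_1 Gamma_real_ge_1)
  moreover have "Gamma (\<tau> - 2 * \<alpha> + 1) > 0" "Gamma (2 * \<alpha>) > 0" "Gamma (\<tau> + 1) > 0"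
    using assms by simp_all
  ultimately have "Gamma (\<tau> - 2 * \<alpha> + 1) * Gamma (2 * \<alpha>) \<le> 1"
    by (intro mult_le_one) auto
  with \<open>1 \<le> Gamma (\<tau> + 1)\<close> have "Beta (\<tau> - 2 * \<alpha> + 1) (2 * \<alpha>) \<le> 1"
    by (simp add: Beta_def divide_le_eq_1)
  moreover have "Beta (\<tau> - 2 * \<alpha> + 1) (2 * \<alpha>) \<ge> 0"
    using \<open>Gamma (\<tau> + 1) > 0\<close> \<open>Gamma (\<tau> - 2 * \<alpha> + 1) > 0\<close> \<open>Gamma (2 * \<alpha>) > 0\<close>
    by (simp add: Beta_def)
  moreover have "0 \<le> sin (pi * \<alpha>) / pi" "sin (pi * \<alpha>) / pi \<le> 1 / pi"
    using assms sin_gt_zero[of "pi * \<alpha>"] by (simp_all add: divide_right_mono)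
  ultimately show ?thesis
    unfolding TB_real_def by (metis mult_right_le_one_le mult_left_le order_trans)
qed

lemma TB_real_le_half:
  assumes a: "0 < \<alpha>" "\<alpha> < 1" and \<tau>: "1 + \<alpha> \<le> \<tau>" "\<tau> < 2"
  shows "TB_real \<alpha> \<tau> \<le> 1/2"
proof (cases "\<alpha> < 1/2")
  case True
  define x where "x = \<tau> - 2 * \<alpha> + 1"
  have x: "x \<ge> 3/2" using a \<tau> True by (simp add: x_def)
  have "sin (pi * \<alpha>) \<le> pi * \<alpha>" using a by (intro sin_x_le_x) auto
  then have "sin (pi * \<alpha>) / pi \<le> \<alpha>" by (simp add: field_simps)
  moreover have "Gamma x / Gamma (x + 2 * \<alpha>) \<le> 1"
    using Gamma_real_strict_mono[of x "x + 2 * \<alpha>"] x a by simp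
  moreover have "2 * \<alpha> * Gamma (2 * \<alpha>) \<le> 1"
  proof -
    have "2 * \<alpha> \<notin> \<int>\<^sub>\<le>\<^sub>0" using a by (auto elim!: nonpos_Ints_cases')
    then have "Gamma (2 * \<alpha> + 1) = 2 * \<alpha> * Gamma (2 * \<alpha>)" by (rule Gamma_plus1)
    moreover have "Gamma (2 * \<alpha> + 1) \<le> 1" using a True by (intro Gamma_real_le_1) auto
    ultimately show ?thesis by simp
  qed
  moreover have "sin (pi * \<alpha>) > 0" "Gamma (2 * \<alpha>) > 0" "Gamma x > 0" "Gamma (x + 2 * \<alpha>) > 0"
    using a x by (auto intro: sin_gt_zero)
  ultimately have "sin (pi * \<alpha>) / pi * (Gamma (2 * \<alpha>) * (Gamma x / Gamma (x + 2 * \<alpha>))) \<le> \<alpha> * (Gamma (2 * \<alpha>) * 1)"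
    using a by (intro mult_mono) auto
  also have "\<dots> \<le> 1/2" using \<open>2 * \<alpha> * Gamma (2 * \<alpha>) \<le> 1\<close> by simp
  finally show ?thesis
    by (simp add: TB_real_def Beta_def x_def mult_ac)
next
  case False
  then have "TB_real \<alpha> \<tau> \<le> 1 / pi"
    using a \<tau> by (intro TB_real_le_inverse_pi) auto
  also have "\<dots> \<le> 1/2" using pi_gt3 by simp
  finally show ?thesis .
qed

lemma norm_Ts_gt_half:
  assumes "1/4 \<le> \<xi>"
  shows "cmod (Ts \<alpha> \<tau> \<xi>) > 1/2"
proof -
  define u where "u = of_real pi * (complex_of_real (1 - \<tau> + \<alpha>) - \<i> * of_real \<xi>)"
  define v where "v = of_real pi * (complex_of_real (1 - \<tau> + 2 * \<alpha>) - \<i> * of_real \<xi>)"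
  define E where "E = exp (2 * pi * \<xi>)"
  define P where "P = E + inverse E"
  have "(3/2)\<^sup>2 \<le> (pi / 2)\<^sup>2" using pi_gt3 by (intro power_mono) auto
  then have "3 < exp (pi / 2)"
    using exp_lower_Taylor_quadratic[of "pi / 2"] pi_gt3 by (simp add: power_divide)
  also have "exp (pi / 2) \<le> E" using assms by (simp add: E_def)
  finally have E: "3 < E" .
  then have "0 < (3 * E - 1) * (E - 3)" by simp
  then have "10 * E < 3 * (E * E + 1)" by (simp add: algebra_simps)
  then have P: "10 < 3 * P"
    using E by (simp add: P_def field_simps)
  have sin_u: "4 * (cmod (sin u))\<^sup>2 = P - 2 * cos (2 * Re u)"
    and sin_v: "4 * (cmod (sin v))\<^sup>2 = P - 2 * cos (2 * Re v)"
    by (simp_all add: norm_sin_squared u_def v_def P_def E_def exp_minus add.commute mult.assoc)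
  have "(cmod (sin v))\<^sup>2 < 4 * (cmod (sin u))\<^sup>2"
    using sin_u sin_v P cos_le_one[of "2 * Re u"] cos_ge_minus_one[of "2 * Re v"] by linarith
  moreover have "0 < (cmod (sin v))\<^sup>2"
    using sin_v P cos_le_one[of "2 * Re v"] by linarith
  ultimately have "cmod (sin v) < 2 * cmod (sin u)" "0 < cmod (sin v)"
    by (auto simp: power_mult_distrib intro: power2_less_imp_less)
  then have "1/2 < cmod (sin u) / cmod (sin v)"
    by (simp add: field_simps)
  also have "cmod (sin u) / cmod (sin v) = cmod (Ts \<alpha> \<tau> \<xi>)"
    by (simp add: Ts_def u_def v_def norm_divide)
  finally show ?thesis .
qed

section \<open>The real equation\<close>

lemma Ts_real_divide_TB_real_strict_antimono:
  assumes a: "0 < \<alpha>" "\<alpha> < 1"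
  shows "strict_antimono_on {real m + 2 * \<alpha> <..< real m + 1 + \<alpha>} (\<lambda>\<tau>. Ts_real \<alpha> \<tau> / TB_real \<alpha> \<tau>)"
proof (rule monotone_onI)
  define K where "K = pi / (sin (pi * \<alpha>) * Gamma (2 * \<alpha>))"
  have K: "K > 0" using a sin_gt_zero[of "pi * \<alpha>"] by (simp add: K_def)
  have ratio: "Ts_real \<alpha> \<tau> / TB_real \<alpha> \<tau> = K * reflection_quotient \<alpha> (\<tau> + 1 - \<alpha>)"
    if "\<tau> \<in> {real m + 2 * \<alpha> <..< real m + 1 + \<alpha>}" for \<tau>
  proof -
    have "\<tau> - 2 * \<alpha> \<notin> \<int>"
      by (rule not_Ints_between[of "int m"]) (use that a in simp_all)
    then show ?thesis
      using that a Ts_real_eq_reflection_quotient_TB_real[of \<alpha> \<tau>] TB_real_pos[of \<alpha> \<tau>]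
      by (simp add: K_def)
  qed
  fix \<tau>1 \<tau>2 assume \<tau>: "\<tau>1 \<in> {real m + 2 * \<alpha> <..< real m + 1 + \<alpha>}" "\<tau>2 \<in> {real m + 2 * \<alpha> <..< real m + 1 + \<alpha>}" "\<tau>1 < \<tau>2"
  have "reflection_quotient \<alpha> (\<tau>2 + 1 - \<alpha>) < reflection_quotient \<alpha> (\<tau>1 + 1 - \<alpha>)"
    using reflection_quotient_real_strict_antimono[OF a, of m] \<tau> by (auto simp: monotone_on_def)
  then show "Ts_real \<alpha> \<tau>2 / TB_real \<alpha> \<tau>2 < Ts_real \<alpha> \<tau>1 / TB_real \<alpha> \<tau>1"
    using K by (simp add: ratio[OF \<tau>(1)] ratio[OF \<tau>(2)])
qed

lemma Ts_real_nonpos: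
  assumes a: "0 < \<alpha>" "\<alpha> < 1" and \<tau>: "1 < \<tau>" "\<tau> < 2"
    and "\<not> (2 * \<alpha> < \<tau> \<and> \<tau> < 1 + \<alpha>)" "\<not> (1 + 2 * \<alpha> < \<tau>)"
  shows "Ts_real \<alpha> \<tau> \<le> 0"
proof (cases "\<tau> \<le> 2 * \<alpha>")
  case True
  have "0 \<le> sin (pi * (1 - \<tau> + \<alpha>))" "sin (pi * (1 - \<tau> + 2 * \<alpha>)) \<le> 0"
    using a \<tau> True by (auto intro!: sin_ge_zero sin_le_zero)
  then show ?thesis unfolding Ts_real_def by (rule divide_nonneg_nonpos)
next
  case False
  then have "1 + \<alpha> \<le> \<tau>" "\<tau> \<le> 1 + 2 * \<alpha>" using assms by auto
  then have "0 \<le> sin (pi * (\<tau> - 1 - \<alpha>))" "0 \<le> sin (pi * (1 - \<tau> + 2 * \<alpha>))"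
    using a \<tau> by (auto intro!: sin_ge_zero)
  moreover have "sin (pi * (1 - \<tau> + \<alpha>)) = - sin (pi * (\<tau> - 1 - \<alpha>))"
    by (simp flip: sin_minus add: algebra_simps)
  ultimately have "sin (pi * (1 - \<tau> + \<alpha>)) \<le> 0" "0 \<le> sin (pi * (1 - \<tau> + 2 * \<alpha>))"
    by simp_all
  then show ?thesis unfolding Ts_real_def by (rule divide_nonpos_nonneg)
qed

lemma TB_real_lt_Ts_real_at_1_2:
  assumes a: "0 < \<alpha>" "\<alpha> < 1/2"
  shows "TB_real \<alpha> 1 < Ts_real \<alpha> 1" and "TB_real \<alpha> 2 < Ts_real \<alpha> 2"
proof -
  define q where "q = sin (pi * \<alpha>) / sin (pi * (2 * \<alpha>))"
  have q: "q > 0" using a sin_gt_zero[of "pi * \<alpha>"] sin_gt_zero[of "pi * (2 * \<alpha>)"] by (simp add: q_def)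
  have reflection: "Gamma (2 * \<alpha>) * Gamma (1 - 2 * \<alpha>) = pi / sin (pi * (2 * \<alpha>))"
    by (rule Gamma_reflection_real)
  have "1 - 2 * \<alpha> \<notin> \<int>\<^sub>\<le>\<^sub>0" "2 - 2 * \<alpha> \<notin> \<int>\<^sub>\<le>\<^sub>0"
    using a by (auto elim!: nonpos_Ints_cases')
  from this[THEN Gamma_plus1]
  have G2: "Gamma (2 - 2 * \<alpha>) = (1 - 2 * \<alpha>) * Gamma (1 - 2 * \<alpha>)"
    and G3: "Gamma (3 - 2 * \<alpha>) = (2 - 2 * \<alpha>) * Gamma (2 - 2 * \<alpha>)"
    by (simp_all add: algebra_simps)
  have "Gamma (3 :: real) = 2" by (simp add: Gamma_numeral)
  have "TB_real \<alpha> 1 = sin (pi * \<alpha>) / pi * (Gamma (2 - 2 * \<alpha>) * Gamma (2 * \<alpha>) / Gamma 2)"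
    "TB_real \<alpha> 2 = sin (pi * \<alpha>) / pi * (Gamma (3 - 2 * \<alpha>) * Gamma (2 * \<alpha>) / Gamma 3)"
    unfolding TB_real_def Beta_def by (simp_all add: algebra_simps)
  then have "TB_real \<alpha> 1 = sin (pi * \<alpha>) / pi * (1 - 2 * \<alpha>) * (Gamma (2 * \<alpha>) * Gamma (1 - 2 * \<alpha>))"
    "TB_real \<alpha> 2 = sin (pi * \<alpha>) / pi * ((1 - \<alpha>) * (1 - 2 * \<alpha>)) * (Gamma (2 * \<alpha>) * Gamma (1 - 2 * \<alpha>))"
    unfolding G3 G2 \<open>Gamma 3 = 2\<close> Gamma_real_two by (simp_all add: field_simps)
  then have "TB_real \<alpha> 1 = (1 - 2 * \<alpha>) * q" "TB_real \<alpha> 2 = (1 - \<alpha>) * (1 - 2 * \<alpha>) * q"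
    unfolding reflection by (simp_all add: q_def)
  moreover have "Ts_real \<alpha> 1 = q" "Ts_real \<alpha> 2 = q"
    by (simp_all add: Ts_real_def q_def sin_diff algebra_simps)
  moreover have "(1 - \<alpha>) * (1 - 2 * \<alpha>) < 1" using a by (simp add: algebra_simps)
  ultimately show "TB_real \<alpha> 1 < Ts_real \<alpha> 1" "TB_real \<alpha> 2 < Ts_real \<alpha> 2"
    using a q by simp_all
qed

lemma continuous_on_Ts_real_minus_TB_real:
  assumes "0 < \<alpha>" "2 * \<alpha> < a" "b < 1 + 2 * \<alpha>"
  shows "continuous_on {a..b} (\<lambda>\<tau>. Ts_real \<alpha> \<tau> - TB_real \<alpha> \<tau>)"
proof (intro continuous_at_imp_continuous_on ballI)
  fix \<tau> assume "\<tau> \<in> {a..b}"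
  with assms have "sin (pi * (1 - \<tau> + 2 * \<alpha>)) \<noteq> 0" "\<tau> - 2 * \<alpha> + 1 \<notin> \<int>\<^sub>\<le>\<^sub>0"
    using sin_gt_zero[of "pi * (1 - \<tau> + 2 * \<alpha>)"] by (auto elim!: nonpos_Ints_cases')
  then show "isCont (\<lambda>\<tau>. Ts_real \<alpha> \<tau> - TB_real \<alpha> \<tau>) \<tau>"
    unfolding Ts_real_def TB_real_def Beta_altdef by (intro continuous_intros)
qed

lemma Ts_real_eq_TB_real_exists:
  assumes a: "0 < \<alpha>" "\<alpha> < 1"
  shows "\<exists>\<tau>. 1 < \<tau> \<and> \<tau> < 1 + \<alpha> \<and> Ts_real \<alpha> \<tau> = TB_real \<alpha> \<tau>"
proof -
  obtain c where c: "1 \<le> c" "2 * \<alpha> < c" "c < 1 + \<alpha>" "TB_real \<alpha> c < Ts_real \<alpha> c"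
  proof (cases "\<alpha> < 1/2")
    case True
    then show ?thesis using a TB_real_lt_Ts_real_at_1_2(1) that[of 1] by simp
  next
    case False
    define c where "c = (1 + 3 * \<alpha>) / 2"
    have "Ts_real \<alpha> c = 1"
    proof -
      have angles: "pi * (1 - c + \<alpha>) = pi * ((1 - \<alpha>) / 2)"
        "pi * (1 - c + 2 * \<alpha>) = pi - pi * ((1 - \<alpha>) / 2)"
        by (simp_all add: c_def field_simps)
      have "sin (pi * ((1 - \<alpha>) / 2)) > 0" using a by (intro sin_gt_zero) auto
      then show ?thesis unfolding Ts_real_def angles sin_pi_minus by simp
    qed
    moreover have "TB_real \<alpha> c \<le> 1 / pi"
      using a False by (intro TB_real_le_inverse_pi) (auto simp: c_def)
    moreover have "1 / pi < (1 :: real)" using pi_gt3 by simp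
    ultimately have "TB_real \<alpha> c < Ts_real \<alpha> c" by linarith
    then show ?thesis by (rule that[rotated 3]) (use a False in \<open>simp_all add: c_def\<close>)
  qed
  \<comment> \<open>at \<open>1 + \<alpha>\<close> the numerator of \<open>Ts_real\<close> vanishes\<close>
  have end_point: "Ts_real \<alpha> (1 + \<alpha>) - TB_real \<alpha> (1 + \<alpha>) < 0"
    using a TB_real_pos[of \<alpha> "1 + \<alpha>"] by (simp add: Ts_real_def)
  obtain \<tau> where \<tau>: "c \<le> \<tau>" "\<tau> \<le> 1 + \<alpha>" "Ts_real \<alpha> \<tau> - TB_real \<alpha> \<tau> = 0"
    using IVT2'[of "\<lambda>\<tau>. Ts_real \<alpha> \<tau> - TB_real \<alpha> \<tau>" "1 + \<alpha>" 0 c]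
      continuous_on_Ts_real_minus_TB_real[of \<alpha> c "1 + \<alpha>"] end_point c a by auto
  moreover have "\<tau> \<noteq> c" "\<tau> \<noteq> 1 + \<alpha>" using \<tau> c end_point by auto
  ultimately show ?thesis using c by (intro exI[of _ \<tau>]) auto
qed

lemma Ts_real_eq_TB_real_between:
  assumes a: "0 < \<alpha>" "\<alpha> < 1" and \<tau>: "1 < \<tau>" "\<tau> < 2" and eq: "Ts_real \<alpha> \<tau> = TB_real \<alpha> \<tau>"
  shows "2 * \<alpha> < \<tau> \<and> \<tau> < 1 + \<alpha>"
proof (rule ccontr)
  assume not_between: "\<not> (2 * \<alpha> < \<tau> \<and> \<tau> < 1 + \<alpha>)"
  have TB_pos: "TB_real \<alpha> \<tau> > 0" using a \<tau> by (intro TB_real_pos) auto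
  show False
  proof (cases "1 + 2 * \<alpha> < \<tau>")
    case True
    \<comment> \<open>on \<open>(1 + 2\<alpha>, 2]\<close> the ratio decreases to its value at \<open>2\<close>, which exceeds \<open>1\<close>\<close>
    then have "\<alpha> < 1/2" using \<tau> by simp
    have "1 < Ts_real \<alpha> 2 / TB_real \<alpha> 2"
      using TB_real_lt_Ts_real_at_1_2(2)[OF a(1) \<open>\<alpha> < 1/2\<close>] TB_real_pos[of \<alpha> 2] a by simp
    also have "\<dots> < Ts_real \<alpha> \<tau> / TB_real \<alpha> \<tau>"
      by (rule monotone_onD[OF Ts_real_divide_TB_real_strict_antimono[OF a, of 1]])
         (use True \<tau> a \<open>\<alpha> < 1/2\<close> in auto)
    finally show False using eq TB_pos by simp
  next
    case False
    then have "Ts_real \<alpha> \<tau> \<le> 0" using a \<tau> not_between by (intro Ts_real_nonpos) auto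
    then show False using eq TB_pos by simp
  qed
qed

lemma Ts_real_eq_TB_real_unique:
  assumes a: "0 < \<alpha>" "\<alpha> < 1"
  obtains \<tau>0 where "1 < \<tau>0" "\<tau>0 < 2" "\<And>\<tau>. 1 < \<tau> \<Longrightarrow> \<tau> < 2 \<Longrightarrow> Ts_real \<alpha> \<tau> = TB_real \<alpha> \<tau> \<longleftrightarrow> \<tau> = \<tau>0"
proof -
  obtain \<tau>0 where \<tau>0: "1 < \<tau>0" "\<tau>0 < 1 + \<alpha>" "Ts_real \<alpha> \<tau>0 = TB_real \<alpha> \<tau>0"
    using Ts_real_eq_TB_real_exists[OF a] by blast
  have inj: "inj_on (\<lambda>\<tau>. Ts_real \<alpha> \<tau> / TB_real \<alpha> \<tau>) {2 * \<alpha> <..< 1 + \<alpha>}"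
  proof -
    have "strict_antimono_on {2 * \<alpha> <..< 1 + \<alpha>} (\<lambda>\<tau>. Ts_real \<alpha> \<tau> / TB_real \<alpha> \<tau>)"
      using Ts_real_divide_TB_real_strict_antimono[OF a, of 0] by simp
    then show ?thesis by (rule strict_antimono_iff_antimono[THEN iffD1, THEN conjunct2])
  qed
  have ratio_one: "Ts_real \<alpha> \<tau> / TB_real \<alpha> \<tau> = 1"
    if "1 < \<tau>" "\<tau> < 2" "Ts_real \<alpha> \<tau> = TB_real \<alpha> \<tau>" for \<tau>
    using that a TB_real_pos[of \<alpha> \<tau>] by simp
  have between: "\<tau> \<in> {2 * \<alpha> <..< 1 + \<alpha>}"
    if "1 < \<tau>" "\<tau> < 2" "Ts_real \<alpha> \<tau> = TB_real \<alpha> \<tau>" for \<tau>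
    using Ts_real_eq_TB_real_between[OF a that] by simp
  have \<tau>0_less_2: "\<tau>0 < 2" using \<tau>0 a by simp
  show ?thesis
  proof (rule that[OF \<tau>0(1) \<tau>0_less_2])
    fix \<tau> :: real assume \<tau>: "1 < \<tau>" "\<tau> < 2"
    show "Ts_real \<alpha> \<tau> = TB_real \<alpha> \<tau> \<longleftrightarrow> \<tau> = \<tau>0"
    proof
      assume eq: "Ts_real \<alpha> \<tau> = TB_real \<alpha> \<tau>"
      have "Ts_real \<alpha> \<tau> / TB_real \<alpha> \<tau> = Ts_real \<alpha> \<tau>0 / TB_real \<alpha> \<tau>0"
        using ratio_one[OF \<tau> eq] ratio_one[OF \<tau>0(1) \<tau>0_less_2 \<tau>0(3)] by simp
      then show "\<tau> = \<tau>0"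
        by (rule inj_onD[OF inj _ between[OF \<tau> eq] between[OF \<tau>0(1) \<tau>0_less_2 \<tau>0(3)]])
    qed (use \<tau>0 in simp)
  qed
qed

lemma Ts_eq_TB_iff:
  assumes a: "0 < \<alpha>" "\<alpha> < 1"
  obtains \<tau>0 where "1 < \<tau>0" "\<tau>0 < 2"
    "\<And>\<tau> \<xi>. 1 < \<tau> \<Longrightarrow> \<tau> < 2 \<Longrightarrow> Ts \<alpha> \<tau> \<xi> = TB \<alpha> \<tau> \<xi> \<longleftrightarrow> \<xi> = 0 \<and> \<tau> = \<tau>0"
proof -
  obtain \<tau>0 where \<tau>0: "1 < \<tau>0" "\<tau>0 < 2"
    and real_root: "\<And>\<tau>. 1 < \<tau> \<Longrightarrow> \<tau> < 2 \<Longrightarrow> Ts_real \<alpha> \<tau> = TB_real \<alpha> \<tau> \<longleftrightarrow> \<tau> = \<tau>0"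
    using Ts_real_eq_TB_real_unique[OF a] by blast
  have "Ts \<alpha> \<tau> \<xi> = TB \<alpha> \<tau> \<xi> \<longleftrightarrow> \<xi> = 0 \<and> \<tau> = \<tau>0" if "1 < \<tau>" "\<tau> < 2" for \<tau> \<xi>
    using real_root[OF that] Ts_ne_TB[OF a that(1), of \<xi>] by (cases "\<xi> = 0") (simp_all add: Ts_zero TB_zero)
  with \<tau>0 show ?thesis by (rule that)
qed

theorem theorem9p4:
  fixes \<alpha> :: real
  assumes "0 < \<alpha>" and "\<alpha> < 1"
  shows "(\<exists>!\<alpha>c. \<forall>\<tau>. 1 < \<tau> \<and> \<tau> < 2 \<longrightarrow> (Ts \<alpha> \<tau> 0 = TB \<alpha> \<tau> 0 \<longleftrightarrow> \<tau> = 1 + \<alpha>c))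
    \<and> (\<forall>\<tau> \<xi>. 1/4 \<le> \<xi> \<and> 1 + \<alpha> \<le> \<tau> \<and> \<tau> < 2 \<longrightarrow> cmod (Ts \<alpha> \<tau> \<xi>) > cmod (TB \<alpha> \<tau> \<xi>))
    \<and> (\<forall>\<tau> \<xi>. 0 < \<xi> \<and> \<xi> < 1/4 \<and> 1 + \<alpha> \<le> \<tau> \<and> \<tau> < 2 \<longrightarrow> Arg (Ts \<alpha> \<tau> \<xi>) \<noteq> Arg (TB \<alpha> \<tau> \<xi>))
    \<and> (\<forall>\<tau> \<xi>. 0 < \<xi> \<and> 1 < \<tau> \<and> \<tau> < 1 + \<alpha> \<longrightarrow> Arg (Ts \<alpha> \<tau> \<xi>) \<noteq> Arg (TB \<alpha> \<tau> \<xi>))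
    \<and> (\<exists>\<alpha>c. (\<forall>\<tau> \<xi>. 1 < \<tau> \<and> \<tau> < 2 \<longrightarrow> (Ts \<alpha> \<tau> \<xi> = TB \<alpha> \<tau> \<xi> \<longleftrightarrow> \<xi> = 0 \<and> \<tau> = 1 + \<alpha>c)))
    \<and> (\<exists>!p. 1 < fst p \<and> fst p < 2 \<and> Ts \<alpha> (fst p) (snd p) = TB \<alpha> (fst p) (snd p))"
proof -
  obtain \<tau>0 where \<tau>0: "1 < \<tau>0" "\<tau>0 < 2"
    and root: "\<And>\<tau> \<xi>. 1 < \<tau> \<Longrightarrow> \<tau> < 2 \<Longrightarrow> Ts \<alpha> \<tau> \<xi> = TB \<alpha> \<tau> \<xi> \<longleftrightarrow> \<xi> = 0 \<and> \<tau> = \<tau>0"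
    using Ts_eq_TB_iff[OF assms] by blast
  have modulus: "cmod (TB \<alpha> \<tau> \<xi>) < cmod (Ts \<alpha> \<tau> \<xi>)" if "1/4 \<le> \<xi>" "1 + \<alpha> \<le> \<tau>" "\<tau> < 2" for \<tau> \<xi>
  proof -
    have "cmod (TB \<alpha> \<tau> \<xi>) \<le> TB_real \<alpha> \<tau>" using assms that by (intro norm_TB_le_TB_real) auto
    moreover have "TB_real \<alpha> \<tau> \<le> 1/2" using assms that by (intro TB_real_le_half) auto
    ultimately show ?thesis using norm_Ts_gt_half[OF that(1), where \<alpha> = \<alpha> and \<tau> = \<tau>] by linarith
  qed
  have phase: "Arg (Ts \<alpha> \<tau> \<xi>) \<noteq> Arg (TB \<alpha> \<tau> \<xi>)" if "0 < \<xi>" "1 < \<tau>" for \<tau> \<xi>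
    using Arg_ne_of_Im_divide_neg Im_Ts_divide_TB_neg assms that by blast
  have unique_pair: "\<exists>!p. 1 < fst p \<and> fst p < 2 \<and> Ts \<alpha> (fst p) (snd p) = TB \<alpha> (fst p) (snd p)"
    by (rule ex1I[of _ "(\<tau>0, 0)"]) (use \<tau>0 root in auto)
  have "\<exists>!\<alpha>c. \<forall>\<tau>. 1 < \<tau> \<and> \<tau> < 2 \<longrightarrow> (Ts \<alpha> \<tau> 0 = TB \<alpha> \<tau> 0 \<longleftrightarrow> \<tau> = 1 + \<alpha>c)"
    by (rule ex1I[of _ "\<tau>0 - 1"]) (use \<tau>0 root in force)+
  then show ?thesis
    using modulus phase unique_pair root assms by (intro conjI exI[of _ "\<tau>0 - 1"]) auto
qed

end
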